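(* Let $G$ be a finite simple undirected graph with $g(G)>\chi(G)$, where $g(G)$ is the girth of $G$ and $\chi(G)$ is the chromatic number of $G$, and let $\beta$ be any proper colouring of $G$. Then $G$ contains an induced path on $\chi(G)$ vertices whose vertices receive pairwise distinct colours under $\beta$.
   Context: A proper colouring $\beta$ of $G$ is a map from $V(G)$ to a set of colours such that $\beta(u)\neq\beta(v)$ for every edge $uv\in E(G)$; it need not use only $\chi(G)$ colours. The girth $g(G)$ is the length of a shortest cycle in $G$ (taken to be $\infty$ if $G$ has no cycle). A path is induced if no two non-consecutive vertices of the path are adjacent in $G$. *)

theory Defs
  imports Main "HOL-Library.Extended_Nat"
begin

definition simple_graph :: "'a set \<Rightarrow> ('a \<Rightarrow> 'a \<Rightarrow> bool) \<Rightarrow> bool" where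
  "simple_graph V E \<longleftrightarrow> finite V \<and> (\<forall>u v. E u v \<longrightarrow> E v u) \<and> (\<forall>v. \<not> E v v)
     \<and> (\<forall>u v. E u v \<longrightarrow> u \<in> V \<and> v \<in> V)"

definition proper_colouring :: "'a set \<Rightarrow> ('a \<Rightarrow> 'a \<Rightarrow> bool) \<Rightarrow> ('a \<Rightarrow> 'c) \<Rightarrow> bool" where
  "proper_colouring V E \<beta> \<longleftrightarrow> (\<forall>u\<in>V. \<forall>v\<in>V. E u v \<longrightarrow> \<beta> u \<noteq> \<beta> v)"

definition chromatic_number :: "'a set \<Rightarrow> ('a \<Rightarrow> 'a \<Rightarrow> bool) \<Rightarrow> nat" where
  "chromatic_number V E = (LEAST k. \<exists>f :: 'a \<Rightarrow> nat. f ` V \<subseteq> {..<k} \<and> proper_colouring V E f)"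

definition is_cycle :: "'a set \<Rightarrow> ('a \<Rightarrow> 'a \<Rightarrow> bool) \<Rightarrow> 'a list \<Rightarrow> bool" where
  "is_cycle V E c \<longleftrightarrow> length c \<ge> 3 \<and> distinct c \<and> set c \<subseteq> V
     \<and> (\<forall>i. Suc i < length c \<longrightarrow> E (c ! i) (c ! Suc i)) \<and> E (last c) (hd c)"

text \<open>Girth: length of a shortest cycle, \<infinity> if there is none (Inf {} = \<infinity> on enat).\<close>
definition girth :: "'a set \<Rightarrow> ('a \<Rightarrow> 'a \<Rightarrow> bool) \<Rightarrow> enat" where
  "girth V E = Inf {enat (length c) | c. is_cycle V E c}"

definition is_induced_path :: "'a set \<Rightarrow> ('a \<Rightarrow> 'a \<Rightarrow> bool) \<Rightarrow> 'a list \<Rightarrow> bool" where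
  "is_induced_path V E p \<longleftrightarrow> distinct p \<and> set p \<subseteq> V
     \<and> (\<forall>i j. i < length p \<and> j < length p \<longrightarrow> (E (p ! i) (p ! j) \<longleftrightarrow> (i = Suc j \<or> j = Suc i)))"

end

theory Submission
  imports Defs
begin

(* Rank the colours of beta by natural numbers. As in the Gallai-Roy-Vitaver theorem, labelling
   each vertex with the number of vertices of a longest walk starting there along which the ranks
   strictly increase is a proper colouring, so some such walk has at least chi(G) vertices.
   Its first chi(G) vertices are distinct, carry distinct colours, and form an induced path:
   a chord between them would close a cycle of length at most chi(G) < g(G). *)

definition increasing_walk :: "'a set \<Rightarrow> ('a \<Rightarrow> 'a \<Rightarrow> bool) \<Rightarrow> ('a \<Rightarrow> 'b::linorder) \<Rightarrow> 'a list \<Rightarrow> bool"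
  where "increasing_walk V E c xs \<longleftrightarrow> set xs \<subseteq> V \<and> successively (\<lambda>u v. E u v \<and> c u < c v) xs"

lemma increasing_walk_Cons:
  "increasing_walk V E c (v # xs) \<longleftrightarrow>
     v \<in> V \<and> increasing_walk V E c xs \<and> (xs = [] \<or> E v (hd xs) \<and> c v < c (hd xs))"
  by (auto simp: increasing_walk_def successively_Cons)

lemma increasing_walk_take:
  assumes "increasing_walk V E c xs"
  shows "increasing_walk V E c (take n xs)"
proof -
  have "successively (\<lambda>u v. E u v \<and> c u < c v) (take n xs @ drop n xs)"
    using assms by (simp add: increasing_walk_def)
  then show ?thesis
    using assms set_take_subset[of n xs] unfolding increasing_walk_def successively_append_iff by blast
qed

lemma increasing_walk_sorted:
  assumes "increasing_walk V E c xs"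
  shows "sorted_wrt (<) (map c xs)"
proof -
  have "successively (\<lambda>u v. c u < c v) xs"
    using assms unfolding increasing_walk_def by (auto intro: successively_mono)
  then show ?thesis
    by (simp add: successively_conv_sorted_wrt flip: successively_map)
qed

lemma increasing_walk_distinct: "increasing_walk V E c xs \<Longrightarrow> distinct xs"
  using increasing_walk_sorted distinct_map strict_sorted_iff by blast

lemma increasing_walk_length_le_card:
  "finite V \<Longrightarrow> increasing_walk V E c xs \<Longrightarrow> length xs \<le> card V"
  by (metis card_mono distinct_card increasing_walk_def increasing_walk_distinct)

definition longest_increasing_walk :: "'a set \<Rightarrow> ('a \<Rightarrow> 'a \<Rightarrow> bool) \<Rightarrow> ('a \<Rightarrow> 'b::linorder) \<Rightarrow> 'a \<Rightarrow> nat"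
  where "longest_increasing_walk V E c v =
    Max {length xs | xs. increasing_walk V E c xs \<and> xs \<noteq> [] \<and> hd xs = v}"

context
  fixes V :: "'a set" and E :: "'a \<Rightarrow> 'a \<Rightarrow> bool" and c :: "'a \<Rightarrow> 'b::linorder"
  assumes finite_V: "finite V"
begin

private abbreviation "walk_lengths v \<equiv>
  {length xs | xs. increasing_walk V E c xs \<and> xs \<noteq> [] \<and> hd xs = v}"

private lemma finite_walk_lengths: "finite (walk_lengths v)"
  by (rule finite_subset[of _ "{..card V}"])
     (auto intro: increasing_walk_length_le_card[OF finite_V])

lemma increasing_walk_length_le_longest:
  "increasing_walk V E c (v # xs) \<Longrightarrow> length (v # xs) \<le> longest_increasing_walk V E c v"
  unfolding longest_increasing_walk_def using finite_walk_lengths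
  by (intro Max_ge) fastforce+

lemma longest_increasing_walk_pos: "v \<in> V \<Longrightarrow> 0 < longest_increasing_walk V E c v"
  using increasing_walk_length_le_longest[of v "[]"]
  by (simp add: increasing_walk_Cons increasing_walk_def)

lemma longest_increasing_walk_obtain:
  assumes "v \<in> V"
  obtains xs where "increasing_walk V E c (v # xs)"
    and "length (v # xs) = longest_increasing_walk V E c v"
proof -
  have "increasing_walk V E c [v]"
    using assms by (simp add: increasing_walk_def)
  then have "length [v] \<in> walk_lengths v"
    unfolding mem_Collect_eq by (intro exI[of _ "[v]"]) simp
  then have "longest_increasing_walk V E c v \<in> walk_lengths v"
    unfolding longest_increasing_walk_def by (intro Max_in finite_walk_lengths) blast
  then obtain ys where "length ys = longest_increasing_walk V E c v"
    and "increasing_walk V E c ys" "ys \<noteq> []" "hd ys = v"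
    unfolding mem_Collect_eq by metis
  then show thesis
    using that[of "tl ys"] by (cases ys) auto
qed

lemma longest_increasing_walk_less:
  assumes "E u v" "c u < c v" "u \<in> V" "v \<in> V"
  shows "longest_increasing_walk V E c v < longest_increasing_walk V E c u"
proof -
  obtain xs where walk: "increasing_walk V E c (v # xs)"
    and len: "length (v # xs) = longest_increasing_walk V E c v"
    using longest_increasing_walk_obtain[OF \<open>v \<in> V\<close>] .
  have "increasing_walk V E c (u # v # xs)"
    using walk assms by (simp add: increasing_walk_Cons)
  then show ?thesis
    using increasing_walk_length_le_longest len by fastforce
qed

end

lemma chromatic_number_le:
  "f ` V \<subseteq> {..<k} \<Longrightarrow> proper_colouring V E f \<Longrightarrow> chromatic_number V E \<le> k"
  unfolding chromatic_number_def by (rule Least_le) blast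

theorem chromatic_number_le_increasing_walk:
  fixes c :: "'a \<Rightarrow> 'b::linorder"
  assumes graph: "simple_graph V E" and proper: "\<And>u v. E u v \<Longrightarrow> c u \<noteq> c v"
  shows "\<exists>xs. increasing_walk V E c xs \<and> chromatic_number V E \<le> length xs"
proof (cases "V = {}")
  case True
  then have "chromatic_number V E \<le> 0"
    by (intro chromatic_number_le[where f = "\<lambda>_. 0"]) (simp_all add: proper_colouring_def)
  then show ?thesis
    by (intro exI[of _ "[]"]) (simp add: increasing_walk_def)
next
  case False
  have finite_V: "finite V" and sym: "\<And>u v. E u v \<Longrightarrow> E v u"
    and edge_in_V: "\<And>u v. E u v \<Longrightarrow> u \<in> V \<and> v \<in> V"
    using graph unfolding simple_graph_def by auto
  let ?h = "longest_increasing_walk V E c"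
  note pos = longest_increasing_walk_pos[OF finite_V, where E = E and c = c]
  have "Max (?h ` V) \<in> ?h ` V"
    using finite_V False by (intro Max_in) auto
  then obtain w where w_Max: "Max (?h ` V) = ?h w" and "w \<in> V"
    by (rule imageE)
  have labels_differ: "?h u \<noteq> ?h v" if "E u v" for u v
  proof -
    have "u \<in> V" "v \<in> V" "E v u" "c u \<noteq> c v"
      using that edge_in_V sym proper by auto
    then show ?thesis
      using longest_increasing_walk_less[OF finite_V, where E = E and c = c and u = u and v = v]
        longest_increasing_walk_less[OF finite_V, where E = E and c = c and u = v and v = u] that
      by (cases rule: linorder_cases[of "c u" "c v"]) auto
  qed
  have "proper_colouring V E (\<lambda>v. ?h v - 1)"
  proof (unfold proper_colouring_def, intro ballI impI)
    fix u v
    assume "u \<in> V" "v \<in> V" "E u v"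
    then show "?h u - 1 \<noteq> ?h v - 1"
      using labels_differ pos by (metis Suc_pred')
  qed
  moreover have "(\<lambda>v. ?h v - 1) ` V \<subseteq> {..<?h w}"
  proof (intro image_subsetI)
    fix v
    assume "v \<in> V"
    then have "?h v \<le> ?h w"
      using finite_V by (simp flip: w_Max)
    then show "?h v - 1 \<in> {..<?h w}"
      using pos[OF \<open>v \<in> V\<close>] by simp
  qed
  ultimately have "chromatic_number V E \<le> ?h w"
    by (intro chromatic_number_le)
  moreover obtain xs where "increasing_walk V E c (w # xs)" "length (w # xs) = ?h w"
    using longest_increasing_walk_obtain[OF finite_V \<open>w \<in> V\<close>] .
  ultimately show ?thesis
    by (intro exI[of _ "w # xs"]) simp
qed

lemma is_cycle_chord:
  assumes "set xs \<subseteq> V" "successively E xs" "distinct xs"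
    and "i + 2 \<le> j" "j < length xs" "E (xs ! j) (xs ! i)"
  shows "is_cycle V E (drop i (take (Suc j) xs))" (is "is_cycle V E ?cy")
proof -
  have len: "length ?cy = Suc j - i"
    using assms by simp
  have nth: "?cy ! k = xs ! (i + k)" if "k < length ?cy" for k
    using that assms by simp
  have "last ?cy = xs ! j" "hd ?cy = xs ! i"
    using nth len assms by (auto simp: last_conv_nth hd_conv_nth)
  moreover have "successively E ?cy"
    using assms(2) by (metis successively_append_iff append_take_drop_id)
  ultimately show ?thesis
    unfolding is_cycle_def successively_conv_nth[symmetric] using assms len
    by (auto dest: in_set_takeD in_set_dropD)
qed

lemma induced_path_if_shorter_than_girth:
  assumes graph: "simple_graph V E"
    and path: "set xs \<subseteq> V" "successively E xs" "distinct xs"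
    and short: "enat (length xs) < girth V E"
  shows "is_induced_path V E xs"
proof -
  have sym: "\<And>u v. E u v \<Longrightarrow> E v u" and irrefl: "\<And>v. \<not> E v v"
    using graph unfolding simple_graph_def by auto
  have no_chord: "\<not> E (xs ! j) (xs ! i)" if "i + 2 \<le> j" "j < length xs" for i j
  proof
    assume "E (xs ! j) (xs ! i)"
    then have "is_cycle V E (drop i (take (Suc j) xs))"
      using is_cycle_chord path that by blast
    then have "girth V E \<le> enat (Suc j - i)"
      unfolding girth_def using that by (force intro: Inf_lower)
    also have "\<dots> \<le> enat (length xs)"
      using that by simp
    finally show False
      using short leD by blast
  qed
  have "E (xs ! i) (xs ! j) \<longleftrightarrow> i = Suc j \<or> j = Suc i"
    if "i < length xs" "j < length xs" for i j
  proof
    assume edge: "E (xs ! i) (xs ! j)"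
    then have "i \<noteq> j"
      using irrefl by auto
    show "i = Suc j \<or> j = Suc i"
    proof (rule ccontr)
      assume "\<not> (i = Suc j \<or> j = Suc i)"
      with \<open>i \<noteq> j\<close> have "i + 2 \<le> j \<or> j + 2 \<le> i"
        by linarith
      then show False
        using no_chord edge sym that by blast
    qed
  next
    show "i = Suc j \<or> j = Suc i \<Longrightarrow> E (xs ! i) (xs ! j)"
      using path(2) sym that by (auto simp: successively_conv_nth)
  qed
  then show ?thesis
    unfolding is_induced_path_def using path by blast
qed

lemma proper_colouring_nat_rank:
  fixes \<beta> :: "'a \<Rightarrow> 'c"
  assumes graph: "simple_graph V E" and proper: "proper_colouring V E \<beta>"
  obtains r :: "'c \<Rightarrow> nat" where "inj_on r (\<beta> ` V)" "\<And>u v. E u v \<Longrightarrow> r (\<beta> u) \<noteq> r (\<beta> v)"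
proof -
  have "finite (\<beta> ` V)"
    using graph by (simp add: simple_graph_def)
  then have "\<exists>(r :: 'c \<Rightarrow> nat) n. r ` \<beta> ` V = {i. i < n} \<and> inj_on r (\<beta> ` V)"
    by (rule finite_imp_inj_to_nat_seg)
  then obtain r :: "'c \<Rightarrow> nat" where r: "inj_on r (\<beta> ` V)"
    by blast
  moreover have "r (\<beta> u) \<noteq> r (\<beta> v)" if "E u v" for u v
  proof -
    have "u \<in> V" "v \<in> V"
      using graph that by (auto simp: simple_graph_def)
    moreover have "\<beta> u \<noteq> \<beta> v"
      using proper that calculation by (auto simp: proper_colouring_def)
    ultimately show ?thesis
      using r by (auto simp: inj_on_eq_iff)
  qed
  ultimately show thesis
    using that by blast
qed

theorem corollary1:
  fixes V :: "'a set" and E :: "'a \<Rightarrow> 'a \<Rightarrow> bool" and \<beta> :: "'a \<Rightarrow> 'c"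
  assumes "simple_graph V E"
    and "girth V E > enat (chromatic_number V E)"
    and "proper_colouring V E \<beta>"
  shows "\<exists>p. is_induced_path V E p \<and> length p = chromatic_number V E \<and> distinct (map \<beta> p)"
proof -
  obtain r :: "'c \<Rightarrow> nat" where rank_proper: "\<And>u v. E u v \<Longrightarrow> (r \<circ> \<beta>) u \<noteq> (r \<circ> \<beta>) v"
    using proper_colouring_nat_rank[OF assms(1,3)] by (metis comp_apply)
  obtain xs where xs: "increasing_walk V E (r \<circ> \<beta>) xs"
    and long: "chromatic_number V E \<le> length xs"
    using chromatic_number_le_increasing_walk[OF assms(1), where c = "r \<circ> \<beta>"] rank_proper by blast
  define p where "p = take (chromatic_number V E) xs"
  have walk: "increasing_walk V E (r \<circ> \<beta>) p"
    unfolding p_def using xs by (rule increasing_walk_take)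
  have "distinct (map r (map \<beta> p))"
    using increasing_walk_sorted[OF walk] by (simp add: strict_sorted_iff)
  moreover have "length p = chromatic_number V E"
    using long p_def by simp
  moreover have "is_induced_path V E p"
    using walk assms(1,2) \<open>length p = _\<close> increasing_walk_distinct[OF walk]
    unfolding increasing_walk_def
    by (intro induced_path_if_shorter_than_girth) (auto elim: successively_mono)
  ultimately show ?thesis
    using distinct_map by blast
qed

end
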